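(* There exists an optimal threshold-type age-dependent policy $\phi^*$ of the MDP $\Lambda$ whose action order $(b_1,\dots,b_K)$ satisfies $Q_{b_k}\le Q_{b_{k+1}}$ for all $1\le k<K$; equivalently, $s\mapsto Q_{\phi^*(s)}$ is nondecreasing in the state $s$.
   Context: Fix $N\in\mathbb{N}^+$ vehicle types $\mathcal{N}=\{1,\dots,N\}$ with arrival probabilities $p_n\in(0,1]$, mean operational costs $c_n\ge0$ and mean sensing capabilities $r_n\in(0,1]$. Fix $\beta\in(0,1)$, $\epsilon>0$. Actions: $\mathcal{A}=2^{\mathcal{N}}$. Success probability $Q_\emptyset=0$, $Q_a=1-\prod_{n\in a}(1-r_np_n)$; expected recruitment cost $E_a=\sum_{n\in a}p_nc_n$. Immediate cost at state $\delta\in\mathbb{N}^+$: $u(\delta,a)=(1-\beta)E_a-\beta\epsilon\big(Q_a(\delta^2+2\delta)-(1+\delta)^2\big)$. MDP $\Lambda$: states $\mathbb{N}^+$; from state $s$ under action $a$ move to $1$ w.p. $Q_a$ and to $s+1$ w.p. $1-Q_a$; average cost $V(\phi)=\limsup_{T\to\infty}\frac1T\mathbb{E}^\phi[\sum_{t=1}^Tu(S(t),A(t))]$, $S(1)=1$, to be minimized. A threshold-type age-dependent policy is a deterministic stationary policy $\phi:\mathbb{N}^+\to\mathcal{A}$ for which there are $K\in\mathbb{N}^+$, an action order $(b_1,\dots,b_K)$ of actions with $b_k\ne b_{k+1}$, and integer thresholds $1\le\theta_{b_1\to b_2}\le\dots\le\theta_{b_{K-1}\to b_K}$ such that $\phi(s)=b_k$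 for $\theta_{b_{k-1}\to b_k}\le s<\theta_{b_k\to b_{k+1}}$ (with the conventions $\theta_{b_0\to b_1}=1$, $\theta_{b_K\to b_{K+1}}=\infty$). *)

theory Defs
  imports "HOL-Probability.Probability"
begin

text \<open>Vehicle types are 1..N; an action is a subset of {1..N}; states are positive naturals.\<close>

definition succ_prob :: "(nat \<Rightarrow> real) \<Rightarrow> (nat \<Rightarrow> real) \<Rightarrow> nat set \<Rightarrow> real" where
  "succ_prob p r a = 1 - (\<Prod>n\<in>a. 1 - r n * p n)"

definition recruit_cost :: "(nat \<Rightarrow> real) \<Rightarrow> (nat \<Rightarrow> real) \<Rightarrow> nat set \<Rightarrow> real" where
  "recruit_cost p c a = (\<Sum>n\<in>a. p n * c n)"

definition imm_cost ::
  "(nat \<Rightarrow> real) \<Rightarrow> (nat \<Rightarrow> real) \<Rightarrow> (nat \<Rightarrow> real) \<Rightarrow> real \<Rightarrow> real \<Rightarrow> nat \<Rightarrow> nat set \<Rightarrow> real" where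
  "imm_cost p c r \<beta> \<epsilon> \<delta> a =
     (1 - \<beta>) * recruit_cost p c a
     - \<beta> * \<epsilon> * (succ_prob p r a * (real \<delta> ^ 2 + 2 * real \<delta>) - (1 + real \<delta>) ^ 2)"

definition trans_pmf :: "(nat \<Rightarrow> real) \<Rightarrow> (nat \<Rightarrow> real) \<Rightarrow> nat \<Rightarrow> nat set \<Rightarrow> nat pmf" where
  "trans_pmf p r s a = map_pmf (\<lambda>b. if b then 1 else Suc s) (bernoulli_pmf (succ_prob p r a))"

type_synonym policy = "(nat \<times> nat set) list \<Rightarrow> nat \<Rightarrow> nat set pmf"

definition admissible :: "nat \<Rightarrow> policy \<Rightarrow> bool" where
  "admissible N \<pi> \<longleftrightarrow> (\<forall>h s. set_pmf (\<pi> h s) \<subseteq> Pow {1..N})"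

text \<open>Distribution of (history, current state) at time t+1; S(1) = 1.\<close>
primrec hist :: "(nat \<Rightarrow> real) \<Rightarrow> (nat \<Rightarrow> real) \<Rightarrow> policy \<Rightarrow> nat \<Rightarrow> ((nat \<times> nat set) list \<times> nat) pmf" where
  "hist p r \<pi> 0 = return_pmf ([], 1)"
| "hist p r \<pi> (Suc t) =
     bind_pmf (hist p r \<pi> t) (\<lambda>(h, s). bind_pmf (\<pi> h s)
       (\<lambda>a. map_pmf (\<lambda>s'. (h @ [(s, a)], s')) (trans_pmf p r s a)))"

definition exp_cost ::
  "(nat \<Rightarrow> real) \<Rightarrow> (nat \<Rightarrow> real) \<Rightarrow> (nat \<Rightarrow> real) \<Rightarrow> real \<Rightarrow> real \<Rightarrow> policy \<Rightarrow> nat \<Rightarrow> real" where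
  "exp_cost p c r \<beta> \<epsilon> \<pi> t =
     measure_pmf.expectation (bind_pmf (hist p r \<pi> t) (\<lambda>(h, s). map_pmf (\<lambda>a. (s, a)) (\<pi> h s)))
       (\<lambda>(s, a). imm_cost p c r \<beta> \<epsilon> s a)"

definition avg_cost ::
  "(nat \<Rightarrow> real) \<Rightarrow> (nat \<Rightarrow> real) \<Rightarrow> (nat \<Rightarrow> real) \<Rightarrow> real \<Rightarrow> real \<Rightarrow> policy \<Rightarrow> ereal" where
  "avg_cost p c r \<beta> \<epsilon> \<pi> =
     limsup (\<lambda>T. ereal ((\<Sum>t<T. exp_cost p c r \<beta> \<epsilon> \<pi> t) / real T))"

definition det_policy :: "(nat \<Rightarrow> nat set) \<Rightarrow> policy" where
  "det_policy \<phi> = (\<lambda>h s. return_pmf (\<phi> s))"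

text \<open>Threshold-type age-dependent policy with action order b 1, ..., b K and
  thresholds theta k = theta_{b_(k-1) -> b_k} (k = 2..K), theta 1 = 1,
  theta (K+1) = infinity.\<close>
definition threshold_policy ::
  "nat \<Rightarrow> (nat \<Rightarrow> nat set) \<Rightarrow> nat \<Rightarrow> (nat \<Rightarrow> nat set) \<Rightarrow> (nat \<Rightarrow> nat) \<Rightarrow> bool" where
  "threshold_policy N \<phi> K b \<theta> \<longleftrightarrow>
     K \<ge> 1
   \<and> (\<forall>k\<in>{1..K}. b k \<subseteq> {1..N})
   \<and> (\<forall>k. 1 \<le> k \<and> k < K \<longrightarrow> b k \<noteq> b (Suc k))
   \<and> \<theta> 1 = 1
   \<and> (\<forall>k. 1 \<le> k \<and> k < K \<longrightarrow> \<theta> k \<le> \<theta> (Suc k))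
   \<and> (\<forall>k\<in>{1..K}. \<forall>s \<ge> 1. \<theta> k \<le> s \<and> (k < K \<longrightarrow> s < \<theta> (Suc k)) \<longrightarrow> \<phi> s = b k)"

end

(*
  The immediate cost is u(s, a) = C a + beta eps (1 - Q a) w s with w s = s^2 + 2 s, and a success
  resets the age to 1, so the average-cost optimality equation reads

    g + h s = min_a (C a + (1 - Q a) (beta eps w s + h (s + 1))),    h 1 = 0.

  For large s the continuation value beta eps w s + h (s + 1) dominates, so an action of maximal
  success probability (cheapest among those) is optimal there, and on this tail the equation has
  an explicit quadratic solution. Below a cutoff M the relative value h is computed by backward
  recursion, and the intermediate value theorem fixes the gain g so that h 1 = 0. This h is
  nondecreasing, so the continuation value is strictly increasing in s, and an exchange argument
  shows that the success probability of minimizing actions is nondecreasing in s. The selector is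
  constant beyond M, hence a threshold policy with actions ordered by Q. Telescoping the
  optimality equation along the process shows that it attains g, while no admissible policy does
  better: the quadratic growth of h is absorbed by the stage cost, which dominates
  beta eps E (S(t+1)^2 - 1).
*)

theory Submission
  imports Defs
begin

section \<open>Minimizing affine functions and long-run averages\<close>

lemma eventually_least_slope_minimal:
  fixes c m :: "'a \<Rightarrow> real"
  assumes "finite A" "a0 \<in> A" "\<forall>a\<in>A. m a0 \<le> m a" "\<forall>a\<in>A. m a = m a0 \<longrightarrow> c a0 \<le> c a"
  shows "\<exists>x0. \<forall>x\<ge>x0. \<forall>a\<in>A. c a0 + m a0 * x \<le> c a + m a * x"
proof (intro exI allI impI ballI)
  define x0 where "x0 = (\<Sum>a\<in>A. \<bar>(c a0 - c a) / (m a - m a0)\<bar>)"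
  fix x a assume "x0 \<le> x" "a \<in> A"
  show "c a0 + m a0 * x \<le> c a + m a * x"
  proof (cases "m a = m a0")
    case False
    then have "0 < m a - m a0" using assms(3) \<open>a \<in> A\<close> by force
    have "(c a0 - c a) / (m a - m a0) \<le> x0"
      unfolding x0_def using assms(1) \<open>a \<in> A\<close>
      by (meson abs_ge_self member_le_sum abs_ge_zero order_trans)
    then have "c a0 - c a \<le> x0 * (m a - m a0)"
      using \<open>0 < m a - m a0\<close> by (simp add: pos_divide_le_eq)
    also have "\<dots> \<le> x * (m a - m a0)"
      using \<open>x0 \<le> x\<close> \<open>0 < m a - m a0\<close> by (simp add: mult_right_mono)
    finally show ?thesis by (simp add: algebra_simps)
  qed (use assms(4) \<open>a \<in> A\<close> in auto)
qed

lemma minimizer_slope_antimono: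
  fixes c1 c2 m1 m2 x1 x2 :: real
  assumes "c1 + m1 * x1 \<le> c2 + m2 * x1" "c2 + m2 * x2 \<le> c1 + m1 * x2" "x1 < x2"
  shows "m2 \<le> m1"
proof -
  have "(m1 - m2) * (x2 - x1) \<ge> 0"
    using assms(1,2) by (simp add: algebra_simps)
  then show ?thesis using assms(3) by (simp add: zero_le_mult_iff)
qed

lemma isCont_Min_image:
  fixes f :: "'a \<Rightarrow> 'b::t2_space \<Rightarrow> real"
  assumes "finite A" "A \<noteq> {}" "\<And>a. a \<in> A \<Longrightarrow> isCont (f a) x"
  shows "isCont (\<lambda>z. Min ((\<lambda>a. f a z) ` A)) x"
  using assms
proof (induction A rule: finite_ne_induct)
  case (insert a A)
  then have "(\<lambda>z. Min ((\<lambda>a. f a z) ` insert a A)) = (\<lambda>z. min (f a z) (Min ((\<lambda>a. f a z) ` A)))"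
    by auto
  with insert show ?case by (auto intro: continuous_min)
qed simp

lemma sum_lower_bound_by_lookahead:
  fixes c :: "nat \<Rightarrow> real"
  assumes lookahead: "\<And>T. real (Suc T) * g - B \<le> (\<Sum>t<Suc T. c t) + \<kappa> * c T"
    and "0 \<le> \<kappa>" and "0 \<le> \<kappa> * g + B"
  shows "real T * g - (\<kappa> * g + B) \<le> (\<Sum>t<T. c t)"
proof (induction T)
  case (Suc T)
  \<comment> \<open>adding \<kappa> times the induction hypothesis to the lookahead bound absorbs the term \<kappa> * c T\<close>
  have "\<kappa> * (real T * g - (\<kappa> * g + B)) \<le> \<kappa> * (\<Sum>t<T. c t)"
    using Suc.IH \<open>0 \<le> \<kappa>\<close> by (rule mult_left_mono)
  then have "(1 + \<kappa>) * (real (Suc T) * g - (\<kappa> * g + B)) \<le> (1 + \<kappa>) * (\<Sum>t<Suc T. c t)"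
    using lookahead[of T] by (simp add: algebra_simps)
  then show ?case
    using \<open>0 \<le> \<kappa>\<close> by (simp add: mult_le_cancel_left_pos)
qed (use assms(3) in simp)

lemma limsup_average_ge:
  fixes c :: "nat \<Rightarrow> real"
  assumes "\<And>T. real T * g - R \<le> (\<Sum>t<T. c t)"
  shows "ereal g \<le> limsup (\<lambda>T. ereal ((\<Sum>t<T. c t) / real T))"
proof -
  have "(\<lambda>T. ereal (g - R / real T)) \<longlonglongrightarrow> ereal (g - 0)"
    by (intro tendsto_ereal tendsto_diff tendsto_const lim_const_over_n)
  then have "ereal g = limsup (\<lambda>T. ereal (g - R / real T))"
    by (intro lim_imp_Limsup[symmetric]) auto
  also have "\<dots> \<le> limsup (\<lambda>T. ereal ((\<Sum>t<T. c t) / real T))"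
  proof (rule Limsup_mono, rule eventually_sequentiallyI)
    fix T :: nat assume "1 \<le> T"
    then have "g - R / real T = (real T * g - R) / real T" by (simp add: field_simps)
    also have "\<dots> \<le> (\<Sum>t<T. c t) / real T"
      using assms[of T] by (simp add: divide_right_mono)
    finally show "ereal (g - R / real T) \<le> ereal ((\<Sum>t<T. c t) / real T)" by simp
  qed
  finally show ?thesis .
qed

lemma limsup_average_le:
  fixes c :: "nat \<Rightarrow> real"
  assumes "\<And>T. 1 \<le> T \<Longrightarrow> (\<Sum>t<T. c t) \<le> real T * g"
  shows "limsup (\<lambda>T. ereal ((\<Sum>t<T. c t) / real T)) \<le> ereal g"
proof (rule Limsup_bounded, rule eventually_sequentiallyI)
  fix T :: nat assume "1 \<le> T"
  then show "ereal ((\<Sum>t<T. c t) / real T) \<le> ereal g"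
    using assms[of T] by (simp add: divide_le_eq mult.commute)
qed

section \<open>Threshold representations\<close>

definition threshold_form :: "(nat \<Rightarrow> 'a) \<Rightarrow> nat \<Rightarrow> (nat \<Rightarrow> 'a) \<Rightarrow> (nat \<Rightarrow> nat) \<Rightarrow> bool" where
  "threshold_form \<phi> K b \<theta> \<longleftrightarrow>
     1 \<le> K \<and> \<theta> 1 = 1
   \<and> (\<forall>k\<in>{1..<K}. \<theta> k < \<theta> (Suc k) \<and> b k \<noteq> b (Suc k) \<and> (\<forall>s\<in>{\<theta> k..<\<theta> (Suc k)}. \<phi> s = b k))
   \<and> (\<forall>s\<ge>\<theta> K. \<phi> s = b K)"

lemma threshold_form_mono:
  assumes "threshold_form \<phi> K b \<theta>" "1 \<le> k" "k \<le> k'" "k' \<le> K"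
  shows "\<theta> k \<le> \<theta> k'"
  using assms(3,4)
proof (induction k' rule: dec_induct)
  case (step n)
  then have "\<theta> n < \<theta> (Suc n)"
    using assms(1,2) unfolding threshold_form_def by simp
  with step show ?case by simp
qed simp

lemma threshold_form_action:
  assumes "threshold_form \<phi> K b \<theta>" "k \<in> {1..K}"
  shows "b k = \<phi> (\<theta> k)"
proof (cases "k = K")
  case False
  then have "k \<in> {1..<K}" using assms(2) by simp
  then have "\<theta> k < \<theta> (Suc k)" "\<forall>s\<in>{\<theta> k..<\<theta> (Suc k)}. \<phi> s = b k"
    using assms(1) by (simp_all add: threshold_form_def)
  then show ?thesis by simp
qed (use assms in \<open>simp add: threshold_form_def\<close>)

lemma threshold_form_append:
  assumes rep: "threshold_form \<psi> K b \<theta>" and "\<theta> K \<le> M"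
    and agree: "\<forall>s\<le>M. \<phi> s = \<psi> s" and tail: "\<forall>s\<ge>Suc M. \<phi> s = a" and "\<phi> M \<noteq> a"
  shows "threshold_form \<phi> (Suc K) (b(Suc K := a)) (\<theta>(Suc K := Suc M))"
proof -
  define b' where "b' = b(Suc K := a)"
  define \<theta>' where "\<theta>' = \<theta>(Suc K := Suc M)"
  have "1 \<le> K" and last: "\<forall>s\<ge>\<theta> K. \<psi> s = b K"
    using rep by (simp_all add: threshold_form_def)
  have "b K = \<phi> M"
    using last[rule_format, of M] agree \<open>\<theta> K \<le> M\<close> by simp
  have "\<theta>' k < \<theta>' (Suc k) \<and> b' k \<noteq> b' (Suc k) \<and> (\<forall>s\<in>{\<theta>' k..<\<theta>' (Suc k)}. \<phi> s = b' k)"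
    if k: "k \<in> {1..<Suc K}" for k
  proof (cases "k = K")
    case True
    have "\<forall>s\<in>{\<theta> K..<Suc M}. \<phi> s = b K"
      using last agree by simp
    moreover have "b K \<noteq> a"
      using \<open>b K = \<phi> M\<close> \<open>\<phi> M \<noteq> a\<close> by simp
    ultimately show ?thesis
      using True \<open>\<theta> K \<le> M\<close> by (simp add: \<theta>'_def b'_def)
  next
    case False
    then have "k \<in> {1..<K}" using k by simp
    then have step: "\<theta> k < \<theta> (Suc k) \<and> b k \<noteq> b (Suc k) \<and> (\<forall>s\<in>{\<theta> k..<\<theta> (Suc k)}. \<psi> s = b k)"
      using rep by (simp add: threshold_form_def)
    have "\<theta> (Suc k) \<le> M"
      using threshold_form_mono[OF rep, of "Suc k" K] \<open>k \<in> {1..<K}\<close> \<open>\<theta> K \<le> M\<close> by simp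
    then have "\<forall>s\<in>{\<theta> k..<\<theta> (Suc k)}. \<phi> s = b k"
      using step agree by auto
    then show ?thesis
      using step \<open>k \<in> {1..<K}\<close> by (simp add: \<theta>'_def b'_def)
  qed
  moreover have "\<theta>' 1 = 1"
    using rep \<open>1 \<le> K\<close> by (simp add: \<theta>'_def threshold_form_def)
  moreover have "\<forall>s\<ge>\<theta>' (Suc K). \<phi> s = b' (Suc K)"
    using tail by (simp add: \<theta>'_def b'_def)
  ultimately show ?thesis
    unfolding threshold_form_def b'_def \<theta>'_def by (metis le_add1 plus_1_eq_Suc)
qed

lemma eventually_const_threshold_form:
  fixes \<phi> :: "nat \<Rightarrow> 'a"
  assumes "1 \<le> M" "\<forall>s\<ge>M. \<phi> s = a"
  shows "\<exists>K b \<theta>. threshold_form \<phi> K b \<theta> \<and> \<theta> K \<le> M"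
  using assms
proof (induction M arbitrary: \<phi> a rule: nat_induct_at_least)
  case base
  then have "threshold_form \<phi> 1 (\<lambda>_. \<phi> 1) (\<lambda>_. 1)"
    by (simp add: threshold_form_def)
  then show ?case by blast
next
  case (Suc M)
  show ?case
  proof (cases "\<phi> M = a")
    case True
    have "\<phi> s = a" if "M \<le> s" for s
      using that Suc.prems True by (cases "s = M") auto
    then have "\<forall>s\<ge>M. \<phi> s = a" by blast
    then show ?thesis
      using Suc.IH le_SucI by blast
  next
    case False
    define \<psi> where "\<psi> s = (if M \<le> s then \<phi> M else \<phi> s)" for s
    have "\<forall>s\<ge>M. \<psi> s = \<phi> M" by (simp add: \<psi>_def)
    then obtain K b \<theta> where "threshold_form \<psi> K b \<theta>" "\<theta> K \<le> M"
      using Suc.IH by blast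
    moreover have "\<forall>s\<le>M. \<phi> s = \<psi> s"
      by (simp add: \<psi>_def)
    ultimately have "threshold_form \<phi> (Suc K) (b(Suc K := a)) (\<theta>(Suc K := Suc M))"
      using Suc.prems False by (rule threshold_form_append)
    moreover have "(\<theta>(Suc K := Suc M)) (Suc K) \<le> Suc M" by simp
    ultimately show ?thesis by blast
  qed
qed

lemma threshold_policy_if_threshold_form:
  assumes rep: "threshold_form \<phi> K b \<theta>" and actions: "\<And>s. \<phi> s \<subseteq> {1..N}"
  shows "threshold_policy N \<phi> K b \<theta>"
proof -
  have "\<phi> s = b k" if "k \<in> {1..K}" "\<theta> k \<le> s" "k < K \<longrightarrow> s < \<theta> (Suc k)" for k s
  proof (cases "k = K")
    case False
    then show ?thesis using rep that by (simp add: threshold_form_def)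
  qed (use rep that in \<open>simp add: threshold_form_def\<close>)
  moreover have "b k \<subseteq> {1..N}" if "k \<in> {1..K}" for k
    using threshold_form_action[OF rep that] actions by simp
  ultimately show ?thesis
    using rep unfolding threshold_policy_def threshold_form_def by (auto simp: less_imp_le)
qed

lemma threshold_form_order:
  assumes rep: "threshold_form \<phi> K b \<theta>" and "mono (\<lambda>s. f (\<phi> s))" "1 \<le> k" "k < K"
  shows "f (b k) \<le> f (b (Suc k))"
proof -
  have "\<theta> k \<le> \<theta> (Suc k)"
    using rep assms(3,4) by (simp add: threshold_form_def less_imp_le)
  then have "f (\<phi> (\<theta> k)) \<le> f (\<phi> (\<theta> (Suc k)))"
    using monoD[OF assms(2)] by simp
  then show ?thesis
    using threshold_form_action[OF rep] assms(3,4) by simp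
qed

section \<open>The optimality equation of the age model\<close>

definition age_penalty :: "nat \<Rightarrow> real" where
  "age_penalty s = real s ^ 2 + 2 * real s"

lemma age_penalty_strict_mono: "strict_mono age_penalty"
  unfolding age_penalty_def by (intro strict_monoI add_strict_mono power_strict_mono) auto

lemma age_penalty_ge: "real s \<le> age_penalty s"
  unfolding age_penalty_def by auto

locale age_cost_model =
  fixes A :: "'a set" and Q C :: "'a \<Rightarrow> real" and \<rho> :: real
  assumes finite_actions: "finite A" and actions_nonempty: "A \<noteq> {}"
    and Q_range: "\<And>a. a \<in> A \<Longrightarrow> 0 \<le> Q a \<and> Q a \<le> 1"
    and C_nonneg: "\<And>a. a \<in> A \<Longrightarrow> 0 \<le> C a"
    and Q_pos: "\<exists>a\<in>A. 0 < Q a"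
    and \<rho>_pos: "0 < \<rho>"
begin

text \<open>The value of action \<open>a\<close> in state \<open>s\<close> when the relative value of the next state \<open>s + 1\<close>
  is \<open>y\<close>; the relative value of the reset state \<open>1\<close> is normalized to \<open>0\<close>.\<close>

definition action_value :: "nat \<Rightarrow> real \<Rightarrow> 'a \<Rightarrow> real" where
  "action_value s y a = C a + (1 - Q a) * (\<rho> * age_penalty s + y)"

definition bellman :: "nat \<Rightarrow> real \<Rightarrow> real" where
  "bellman s y = Min (action_value s y ` A)"

lemma bellman_le: "a \<in> A \<Longrightarrow> bellman s y \<le> action_value s y a"
  unfolding bellman_def using finite_actions by simp

lemma bellman_attained: "\<exists>a\<in>A. bellman s y = action_value s y a"
proof -
  have "bellman s y \<in> action_value s y ` A"
    unfolding bellman_def using finite_actions actions_nonempty by (intro Min_in) auto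
  then show ?thesis by auto
qed

lemma action_value_mono:
  assumes "a \<in> A" "s \<le> s'" "y \<le> y'"
  shows "action_value s y a \<le> action_value s' y' a"
proof -
  have "age_penalty s \<le> age_penalty s'"
    using age_penalty_strict_mono assms(2) by (simp add: strict_mono_less_eq)
  then have "\<rho> * age_penalty s + y \<le> \<rho> * age_penalty s' + y'"
    using \<rho>_pos assms(3) by (simp add: add_mono)
  then show ?thesis
    unfolding action_value_def using Q_range[OF assms(1)] by (simp add: mult_left_mono)
qed

lemma bellman_mono:
  assumes "s \<le> s'" "y \<le> y'"
  shows "bellman s y \<le> bellman s' y'"
proof -
  obtain a where "a \<in> A" "bellman s' y' = action_value s' y' a"
    using bellman_attained by blast
  then have "bellman s y \<le> action_value s y a" by (simp add: bellman_le)
  also have "\<dots> \<le> action_value s' y' a" using \<open>a \<in> A\<close> assms by (rule action_value_mono)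
  finally show ?thesis using \<open>bellman s' y' = action_value s' y' a\<close> by simp
qed

lemma bellman_nonneg:
  assumes "0 \<le> y"
  shows "0 \<le> bellman s y"
proof -
  obtain a where "a \<in> A" "bellman s y = action_value s y a"
    using bellman_attained by blast
  moreover have "0 \<le> (1 - Q a) * (\<rho> * age_penalty s + y)"
    using Q_range[OF \<open>a \<in> A\<close>] \<rho>_pos assms by (simp add: age_penalty_def)
  ultimately show ?thesis
    unfolding action_value_def using C_nonneg by simp
qed

lemma isCont_bellman:
  assumes "isCont f x"
  shows "isCont (\<lambda>z. bellman s (f z)) x"
  unfolding bellman_def action_value_def
  by (rule isCont_Min_image[OF finite_actions actions_nonempty]) (intro continuous_intros assms)

definition tail_action :: 'a where
  "tail_action = (SOME a. a \<in> A \<and> (\<forall>b\<in>A. Q b \<le> Q a) \<and> (\<forall>b\<in>A. Q b = Q a \<longrightarrow> C a \<le> C b))"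

lemma tail_action:
  "tail_action \<in> A" "\<forall>b\<in>A. Q b \<le> Q tail_action" "\<forall>b\<in>A. Q b = Q tail_action \<longrightarrow> C tail_action \<le> C b"
proof -
  define q where "q = Max (Q ` A)"
  have "q \<in> Q ` A"
    unfolding q_def using finite_actions actions_nonempty by (intro Max_in) auto
  then have "{a\<in>A. Q a = q} \<noteq> {}" by auto
  then obtain a where "is_arg_min C (\<lambda>a. a \<in> {a\<in>A. Q a = q}) a"
    using ex_is_arg_min_if_finite[of "{a\<in>A. Q a = q}" C] finite_actions by auto
  then have "a \<in> A \<and> (\<forall>b\<in>A. Q b \<le> Q a) \<and> (\<forall>b\<in>A. Q b = Q a \<longrightarrow> C a \<le> C b)"
    unfolding is_arg_min_def q_def using finite_actions by (auto simp: not_less)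
  then have "tail_action \<in> A \<and> (\<forall>b\<in>A. Q b \<le> Q tail_action)
      \<and> (\<forall>b\<in>A. Q b = Q tail_action \<longrightarrow> C tail_action \<le> C b)"
    unfolding tail_action_def by (rule someI)
  then show "tail_action \<in> A" "\<forall>b\<in>A. Q b \<le> Q tail_action"
      "\<forall>b\<in>A. Q b = Q tail_action \<longrightarrow> C tail_action \<le> C b"
    by simp_all
qed

abbreviation q_tail :: real where
  "q_tail \<equiv> Q tail_action"

lemma q_tail_pos: "0 < q_tail" and q_tail_le_1: "q_tail \<le> 1"
  using Q_pos tail_action Q_range[OF tail_action(1)] by force+

definition tail_sq :: real where
  "tail_sq = (1 - q_tail) * \<rho> / q_tail"

definition tail_lin :: real where
  "tail_lin = 2 * (1 - q_tail) * (\<rho> + tail_sq) / q_tail"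

text \<open>The coefficients of \<open>tail_value\<close> are found by comparing powers of \<open>s\<close> in
  \<open>tail_value_eq\<close> below.\<close>

definition tail_value :: "real \<Rightarrow> nat \<Rightarrow> real" where
  "tail_value g s = tail_sq * real s ^ 2 + tail_lin * real s
     + (C tail_action - g + (1 - q_tail) * (tail_sq + tail_lin)) / q_tail"

definition gain_bound :: real where
  "gain_bound = tail_sq + tail_lin + C tail_action"

lemma tail_coeffs_nonneg: "0 \<le> tail_sq" "0 \<le> tail_lin"
  unfolding tail_sq_def tail_lin_def using q_tail_pos q_tail_le_1 \<rho>_pos by simp_all

lemma gain_bound_nonneg: "0 \<le> gain_bound"
  unfolding gain_bound_def using tail_coeffs_nonneg C_nonneg[OF tail_action(1)] by simp

lemma tail_value_eq: "g + tail_value g s = action_value s (tail_value g (Suc s)) tail_action"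
proof -
  have "q_tail * (g + tail_value g s) = q_tail * action_value s (tail_value g (Suc s)) tail_action"
    unfolding tail_value_def action_value_def age_penalty_def tail_lin_def tail_sq_def
    using q_tail_pos by (simp add: field_simps power2_eq_square)
  then show ?thesis using q_tail_pos by simp
qed

lemma tail_value_Suc: "tail_value g s \<le> tail_value g (Suc s)"
  unfolding tail_value_def using tail_coeffs_nonneg
  by (intro add_mono mult_left_mono power_mono) auto

lemma tail_value_lower: "- g / q_tail \<le> tail_value g s"
proof -
  have "0 \<le> (C tail_action + (1 - q_tail) * (tail_sq + tail_lin)) / q_tail"
    using C_nonneg[OF tail_action(1)] tail_coeffs_nonneg q_tail_pos q_tail_le_1 by simp
  then show ?thesis
    unfolding tail_value_def using tail_coeffs_nonneg by (simp add: diff_divide_distrib add_divide_distrib)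
qed

lemma tail_value_gain_bound: "tail_value gain_bound 1 = 0"
  unfolding tail_value_def gain_bound_def using q_tail_pos by (simp add: field_simps)

lemma tail_value_quadratic:
  "tail_value g s \<le> (tail_sq + tail_lin) * (real s ^ 2 - 1) + tail_value g 1"
proof -
  have "real s \<le> real s ^ 2"
    by (cases s) (auto simp: power2_eq_square)
  then have "tail_lin * real s \<le> tail_lin * real s ^ 2"
    using tail_coeffs_nonneg by (intro mult_left_mono) auto
  then show ?thesis unfolding tail_value_def by (simp add: algebra_simps)
qed

lemma tail_action_eventually_optimal:
  "\<exists>M\<ge>1. \<forall>s\<ge>M. \<forall>g\<in>{0..gain_bound}.
     bellman s (tail_value g (Suc s)) = action_value s (tail_value g (Suc s)) tail_action"
proof -
  obtain x0 where x0: "\<forall>x\<ge>x0. \<forall>a\<in>A. C tail_action + (1 - q_tail) * x \<le> C a + (1 - Q a) * x"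
    using eventually_least_slope_minimal[of A tail_action "\<lambda>a. 1 - Q a" C]
      finite_actions tail_action by auto
  define M where "M = nat \<lceil>(x0 + gain_bound / q_tail) / \<rho>\<rceil> + 1"
  have "bellman s (tail_value g (Suc s)) = action_value s (tail_value g (Suc s)) tail_action"
    if "M \<le> s" "g \<in> {0..gain_bound}" for s g
  proof -
    have "(x0 + gain_bound / q_tail) / \<rho> \<le> real M"
      unfolding M_def by linarith
    then have "x0 + gain_bound / q_tail \<le> \<rho> * real M"
      using \<rho>_pos by (simp add: pos_divide_le_eq mult.commute)
    also have "\<dots> \<le> \<rho> * age_penalty s"
      using \<rho>_pos that(1) age_penalty_ge[of s] by simp
    finally have "x0 \<le> \<rho> * age_penalty s - gain_bound / q_tail" by simp
    also have "\<dots> \<le> \<rho> * age_penalty s - g / q_tail"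
      using that(2) q_tail_pos by (simp add: divide_right_mono)
    also have "\<dots> \<le> \<rho> * age_penalty s + tail_value g (Suc s)"
      using tail_value_lower[of g "Suc s"] by simp
    finally have "action_value s (tail_value g (Suc s)) tail_action \<le> action_value s (tail_value g (Suc s)) a"
      if "a \<in> A" for a
      using x0 that unfolding action_value_def by blast
    then show ?thesis
      using bellman_attained bellman_le tail_action(1) by (metis order_antisym)
  qed
  moreover have "1 \<le> M" by (simp add: M_def)
  ultimately show ?thesis by blast
qed

function relative_value :: "nat \<Rightarrow> real \<Rightarrow> nat \<Rightarrow> real" where
  "relative_value M g s =
     (if M \<le> s then tail_value g s else bellman s (relative_value M g (Suc s)) - g)"
  by auto
termination by (relation "Wellfounded.measure (\<lambda>(M, g, s). M - s)") auto

declare relative_value.simps [simp del]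

lemma relative_value_tail: "M \<le> s \<Longrightarrow> relative_value M g s = tail_value g s"
  by (simp add: relative_value.simps)

lemma relative_value_step: "s < M \<Longrightarrow> relative_value M g s = bellman s (relative_value M g (Suc s)) - g"
  by (subst relative_value.simps) simp

lemma relative_value_le_tail: "relative_value M g s \<le> tail_value g s"
proof (induction M g s rule: relative_value.induct)
  case (1 M g s)
  show ?case
  proof (cases "M \<le> s")
    case False
    then have "relative_value M g s \<le> action_value s (relative_value M g (Suc s)) tail_action - g"
      using bellman_le[OF tail_action(1)] by (simp add: relative_value_step)
    also have "\<dots> \<le> action_value s (tail_value g (Suc s)) tail_action - g"
      using 1 False tail_action(1) by (simp add: action_value_mono)
    finally show ?thesis using tail_value_eq[of g s] by simp
  qed (simp add: relative_value_tail)
qed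

lemma relative_value_zero_nonneg: "0 \<le> relative_value M 0 s"
proof (induction M "0::real" s rule: relative_value.induct)
  case (1 M s)
  show ?case
    using 1 tail_value_lower[of 0 s] bellman_nonneg
    by (cases "M \<le> s") (simp_all add: relative_value_tail relative_value_step)
qed

lemma isCont_relative_value: "isCont (\<lambda>g. relative_value M g s) g0"
proof (induction M g0 s rule: relative_value.induct)
  case (1 M g0 s)
  show ?case
  proof (cases "M \<le> s")
    case True
    then show ?thesis
      using q_tail_pos by (auto simp: relative_value_tail tail_value_def intro!: continuous_intros)
  next
    case False
    then show ?thesis
      using 1 by (simp add: relative_value_step isCont_bellman)
  qed
qed

lemma exists_normalized_gain: "\<exists>g\<in>{0..gain_bound}. relative_value M g 1 = 0"
proof -
  have "relative_value M gain_bound 1 \<le> 0"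
    using relative_value_le_tail[of M gain_bound 1] tail_value_gain_bound by simp
  then have "\<exists>g. 0 \<le> g \<and> g \<le> gain_bound \<and> relative_value M g 1 = 0"
    using relative_value_zero_nonneg gain_bound_nonneg isCont_relative_value
    by (intro IVT2) auto
  then show ?thesis by auto
qed

context
  fixes M :: nat
  assumes tail_optimal: "\<forall>s\<ge>M. \<forall>g\<in>{0..gain_bound}.
    bellman s (tail_value g (Suc s)) = action_value s (tail_value g (Suc s)) tail_action"
begin

lemma relative_value_optimality:
  assumes "g \<in> {0..gain_bound}"
  shows "g + relative_value M g s = bellman s (relative_value M g (Suc s))"
proof (cases "M \<le> s")
  case True
  then show ?thesis
    using tail_optimal assms tail_value_eq[of g s] by (simp add: relative_value_tail)
qed (simp add: relative_value_step)

lemma relative_value_Suc: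
  assumes "g \<in> {0..gain_bound}"
  shows "relative_value M g s \<le> relative_value M g (Suc s)"
proof (induction "M - s" arbitrary: s)
  case 0
  then show ?case
    using tail_value_Suc by (simp add: relative_value_tail)
next
  case (Suc d)
  then have "relative_value M g (Suc s) \<le> relative_value M g (Suc (Suc s))"
    by simp
  then have "bellman s (relative_value M g (Suc s)) \<le> bellman (Suc s) (relative_value M g (Suc (Suc s)))"
    by (simp add: bellman_mono)
  then show ?case
    using relative_value_optimality[OF assms] by (metis add_le_cancel_left)
qed

end

lemma monotone_minimizer_selector:
  assumes "mono h"
    and tail: "\<forall>s\<ge>M. bellman s (h (Suc s)) = action_value s (h (Suc s)) tail_action"
  obtains \<phi> where "\<And>s. \<phi> s \<in> A" "\<And>s. bellman s (h (Suc s)) = action_value s (h (Suc s)) (\<phi> s)"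
    "\<And>s. M \<le> s \<Longrightarrow> \<phi> s = tail_action" "mono (\<lambda>s. Q (\<phi> s))"
proof
  define \<phi> where "\<phi> s = (if M \<le> s then tail_action
    else (SOME a. a \<in> A \<and> bellman s (h (Suc s)) = action_value s (h (Suc s)) a))" for s
  have min: "\<phi> s \<in> A \<and> bellman s (h (Suc s)) = action_value s (h (Suc s)) (\<phi> s)" for s
  proof (cases "M \<le> s")
    case False
    then show ?thesis
      unfolding \<phi>_def using someI_ex[OF bellman_attained[of s "h (Suc s)", unfolded Bex_def]] by simp
  qed (simp add: \<phi>_def tail tail_action(1))
  then show "\<phi> s \<in> A" "bellman s (h (Suc s)) = action_value s (h (Suc s)) (\<phi> s)" for s
    by simp_all
  show "M \<le> s \<Longrightarrow> \<phi> s = tail_action" for s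
    by (simp add: \<phi>_def)
  show "mono (\<lambda>s. Q (\<phi> s))"
  proof (rule monoI)
    fix s s' :: nat assume "s \<le> s'"
    show "Q (\<phi> s) \<le> Q (\<phi> s')"
    proof (cases "s = s'")
      case False
      \<comment> \<open>the continuation value \<rho> * age_penalty s + h (Suc s) grows strictly with s, and among
        affine functions of it the minimizer's slope 1 - Q can only decrease\<close>
      have "h (Suc s) \<le> h (Suc s')"
        using \<open>mono h\<close> \<open>s \<le> s'\<close> by (simp add: monoD)
      moreover have "age_penalty s < age_penalty s'"
        using \<open>s \<le> s'\<close> False age_penalty_strict_mono by (simp add: strict_mono_less)
      ultimately have "\<rho> * age_penalty s + h (Suc s) < \<rho> * age_penalty s' + h (Suc s')"
        using \<rho>_pos by (simp add: add_less_le_mono)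
      moreover have "action_value s (h (Suc s)) (\<phi> s) \<le> action_value s (h (Suc s)) (\<phi> s')"
        "action_value s' (h (Suc s')) (\<phi> s') \<le> action_value s' (h (Suc s')) (\<phi> s)"
        using min bellman_le by metis+
      ultimately have "1 - Q (\<phi> s') \<le> 1 - Q (\<phi> s)"
        unfolding action_value_def by (rule minimizer_slope_antimono[rotated 2])
      then show ?thesis by simp
    qed simp
  qed
qed

theorem average_cost_optimality_solution:
  obtains g h \<phi> M \<kappa> B where "0 \<le> g" "h 1 = 0" "mono h"
    "\<And>s a. a \<in> A \<Longrightarrow> g + h s \<le> action_value s (h (Suc s)) a"
    "\<And>s. \<phi> s \<in> A" "\<And>s. g + h s = action_value s (h (Suc s)) (\<phi> s)"
    "1 \<le> M" "\<And>s. M \<le> s \<Longrightarrow> \<phi> s = tail_action" "mono (\<lambda>s. Q (\<phi> s))"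
    "0 \<le> \<kappa>" "\<And>s. h s \<le> \<kappa> * (real s ^ 2 - 1) + B"
proof -
  obtain M where "1 \<le> M" and tail_optimal: "\<forall>s\<ge>M. \<forall>g\<in>{0..gain_bound}.
      bellman s (tail_value g (Suc s)) = action_value s (tail_value g (Suc s)) tail_action"
    using tail_action_eventually_optimal by blast
  obtain g where g: "g \<in> {0..gain_bound}" and "relative_value M g 1 = 0"
    using exists_normalized_gain by blast
  define h where "h = relative_value M g"
  have optimality: "g + h s = bellman s (h (Suc s))" for s
    unfolding h_def using relative_value_optimality[OF tail_optimal g] .
  have "mono h"
    unfolding h_def using relative_value_Suc[OF tail_optimal g] by (rule incseq_SucI)
  moreover have "\<forall>s\<ge>M. bellman s (h (Suc s)) = action_value s (h (Suc s)) tail_action"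
    using tail_optimal g by (simp add: h_def relative_value_tail)
  ultimately obtain \<phi> where \<phi>: "\<And>s. \<phi> s \<in> A" "\<And>s. bellman s (h (Suc s)) = action_value s (h (Suc s)) (\<phi> s)"
    "\<And>s. M \<le> s \<Longrightarrow> \<phi> s = tail_action" "mono (\<lambda>s. Q (\<phi> s))"
    by (rule monotone_minimizer_selector) blast
  have "h 1 = 0"
    using \<open>relative_value M g 1 = 0\<close> by (simp add: h_def)
  moreover have "g + h s \<le> action_value s (h (Suc s)) a" if "a \<in> A" for s a
    using optimality[of s] bellman_le[OF that] by simp
  moreover have "g + h s = action_value s (h (Suc s)) (\<phi> s)" for s
    using optimality[of s] \<phi>(2)[of s] by simp
  moreover have "h s \<le> (tail_sq + tail_lin) * (real s ^ 2 - 1) + tail_value g 1" for s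
    unfolding h_def using relative_value_le_tail tail_value_quadratic order_trans by blast
  moreover have "0 \<le> tail_sq + tail_lin"
    using tail_coeffs_nonneg by simp
  moreover have "0 \<le> g"
    using g by simp
  ultimately show ?thesis
    using that[of g h \<phi> M "tail_sq + tail_lin" "tail_value g 1"] \<phi> \<open>1 \<le> M\<close> \<open>mono h\<close> by blast
qed

end

section \<open>The controlled age process\<close>

lemma expectation_bind_pmf_finite:
  fixes f :: "'b \<Rightarrow> real"
  assumes "finite (set_pmf M)" "\<And>x. x \<in> set_pmf M \<Longrightarrow> finite (set_pmf (N x))"
  shows "measure_pmf.expectation (bind_pmf M N) f =
    measure_pmf.expectation M (\<lambda>x. measure_pmf.expectation (N x) f)"
  using assms by (simp add: pmf_expectation_bind[OF assms(1) _ order.refl] integral_measure_pmf[OF assms(1)])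

lemma expectation_mono_finite_pmf:
  fixes f g :: "'a \<Rightarrow> real"
  assumes "finite (set_pmf M)" "\<And>x. x \<in> set_pmf M \<Longrightarrow> f x \<le> g x"
  shows "measure_pmf.expectation M f \<le> measure_pmf.expectation M g"
  using assms by (intro integral_mono_AE) (auto simp: AE_measure_pmf_iff integrable_measure_pmf_finite)

text \<open>Index \<open>t\<close> refers to time \<open>t + 1\<close>, as for \<open>hist\<close>.\<close>

definition state_action_pmf :: "(nat \<Rightarrow> real) \<Rightarrow> (nat \<Rightarrow> real) \<Rightarrow> policy \<Rightarrow> nat \<Rightarrow> (nat \<times> nat set) pmf" where
  "state_action_pmf p r \<pi> t = bind_pmf (hist p r \<pi> t) (\<lambda>(h, s). map_pmf (\<lambda>a. (s, a)) (\<pi> h s))"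

definition state_pmf :: "(nat \<Rightarrow> real) \<Rightarrow> (nat \<Rightarrow> real) \<Rightarrow> policy \<Rightarrow> nat \<Rightarrow> nat pmf" where
  "state_pmf p r \<pi> t = map_pmf snd (hist p r \<pi> t)"

lemma state_pmf_0: "state_pmf p r \<pi> 0 = return_pmf 1"
  by (simp add: state_pmf_def)

lemma state_pmf_Suc:
  "state_pmf p r \<pi> (Suc t) = bind_pmf (state_action_pmf p r \<pi> t) (\<lambda>(s, a). trans_pmf p r s a)"
  unfolding state_pmf_def state_action_pmf_def
  by (simp add: map_bind_pmf bind_assoc_pmf bind_map_pmf split_beta map_pmf_comp)

lemma state_pmf_eq_map: "state_pmf p r \<pi> t = map_pmf fst (state_action_pmf p r \<pi> t)"
  unfolding state_pmf_def state_action_pmf_def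
  by (simp add: map_bind_pmf map_pmf_comp split_beta) (simp add: map_pmf_def)

lemma exp_cost_eq:
  "exp_cost p c r \<beta> \<epsilon> \<pi> t =
     measure_pmf.expectation (state_action_pmf p r \<pi> t) (\<lambda>(s, a). imm_cost p c r \<beta> \<epsilon> s a)"
  unfolding exp_cost_def state_action_pmf_def ..

lemma set_trans_pmf: "set_pmf (trans_pmf p r s a) \<subseteq> {1, Suc s}"
  by (auto simp: trans_pmf_def)

lemma set_hist:
  assumes "(h, s) \<in> set_pmf (hist p r \<pi> t)"
  shows "s \<in> {1..Suc t}"
  using assms
proof (induction t arbitrary: h s)
  case (Suc t)
  then obtain h' s' a where "(h', s') \<in> set_pmf (hist p r \<pi> t)" "s \<in> set_pmf (trans_pmf p r s' a)"
    by (auto simp: split_beta)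
  then show ?case
    using Suc.IH set_trans_pmf[of p r s' a] by fastforce
qed simp

lemma set_state_action_pmf:
  assumes "admissible N \<pi>"
  shows "set_pmf (state_action_pmf p r \<pi> t) \<subseteq> {1..Suc t} \<times> Pow {1..N}"
  using assms set_hist unfolding state_action_pmf_def admissible_def by (fastforce simp: split_beta)

lemma set_state_action_pmf_action:
  assumes "admissible N \<pi>" "x \<in> set_pmf (state_action_pmf p r \<pi> t)"
  shows "snd x \<subseteq> {1..N}"
proof -
  have "x \<in> {1..Suc t} \<times> Pow {1..N}"
    using set_state_action_pmf[OF assms(1)] assms(2) by blast
  then show ?thesis by auto
qed

lemma finite_state_action_pmf: "admissible N \<pi> \<Longrightarrow> finite (set_pmf (state_action_pmf p r \<pi> t))"
  using set_state_action_pmf by (rule finite_subset) auto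

lemma finite_state_pmf: "admissible N \<pi> \<Longrightarrow> finite (set_pmf (state_pmf p r \<pi> t))"
  unfolding state_pmf_eq_map by (simp add: finite_state_action_pmf)

lemma set_state_pmf: "set_pmf (state_pmf p r \<pi> t) \<subseteq> {1..Suc t}"
  unfolding state_pmf_def using set_hist by fastforce

lemma expectation_state_pmf:
  fixes f :: "nat \<Rightarrow> real"
  shows "measure_pmf.expectation (state_pmf p r \<pi> t) f =
     measure_pmf.expectation (state_action_pmf p r \<pi> t) (\<lambda>(s, a). f s)"
  unfolding state_pmf_eq_map by (simp add: case_prod_unfold)

lemma expectation_state_pmf_Suc:
  fixes f :: "nat \<Rightarrow> real"
  assumes "admissible N \<pi>"
  shows "measure_pmf.expectation (state_pmf p r \<pi> (Suc t)) f =
     measure_pmf.expectation (state_action_pmf p r \<pi> t)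
       (\<lambda>(s, a). measure_pmf.expectation (trans_pmf p r s a) f)"
proof -
  have "measure_pmf.expectation (state_pmf p r \<pi> (Suc t)) f =
     measure_pmf.expectation (state_action_pmf p r \<pi> t)
       (\<lambda>x. measure_pmf.expectation ((\<lambda>(s, a). trans_pmf p r s a) x) f)"
    unfolding state_pmf_Suc using finite_state_action_pmf[OF assms]
    by (rule expectation_bind_pmf_finite) (auto intro: finite_subset[OF set_trans_pmf])
  then show ?thesis by (simp add: case_prod_unfold)
qed

lemma sum_exp_cost_telescope:
  fixes h :: "nat \<Rightarrow> real"
  assumes "admissible N \<pi>"
  shows "(\<Sum>t<T. exp_cost p c r \<beta> \<epsilon> \<pi> t) + measure_pmf.expectation (state_pmf p r \<pi> T) h =
    h 1 + (\<Sum>t<T. measure_pmf.expectation (state_action_pmf p r \<pi> t)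
      (\<lambda>(s, a). imm_cost p c r \<beta> \<epsilon> s a + measure_pmf.expectation (trans_pmf p r s a) h - h s))"
proof (induction T)
  case (Suc T)
  let ?E = "measure_pmf.expectation (state_action_pmf p r \<pi> T)"
  have int: "integrable (measure_pmf (state_action_pmf p r \<pi> T)) f" for f :: "_ \<Rightarrow> real"
    using finite_state_action_pmf[OF assms] by (rule integrable_measure_pmf_finite)
  have "?E (\<lambda>(s, a). imm_cost p c r \<beta> \<epsilon> s a + measure_pmf.expectation (trans_pmf p r s a) h - h s)
      = ?E (\<lambda>(s, a). imm_cost p c r \<beta> \<epsilon> s a)
        + ?E (\<lambda>(s, a). measure_pmf.expectation (trans_pmf p r s a) h) - ?E (\<lambda>(s, a). h s)"
    by (simp add: case_prod_unfold int)
  also have "\<dots> = exp_cost p c r \<beta> \<epsilon> \<pi> T + measure_pmf.expectation (state_pmf p r \<pi> (Suc T)) h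
        - measure_pmf.expectation (state_pmf p r \<pi> T) h"
    by (simp only: exp_cost_eq expectation_state_pmf_Suc[OF assms] expectation_state_pmf[where t=T])
  finally have step: "?E (\<lambda>(s, a). imm_cost p c r \<beta> \<epsilon> s a + measure_pmf.expectation (trans_pmf p r s a) h - h s)
      = exp_cost p c r \<beta> \<epsilon> \<pi> T + measure_pmf.expectation (state_pmf p r \<pi> (Suc T)) h
        - measure_pmf.expectation (state_pmf p r \<pi> T) h" .
  with Suc.IH show ?case by simp
qed (simp add: state_pmf_0)

section \<open>Optimality of a monotone threshold policy\<close>

definition base_cost :: "(nat \<Rightarrow> real) \<Rightarrow> (nat \<Rightarrow> real) \<Rightarrow> real \<Rightarrow> real \<Rightarrow> nat set \<Rightarrow> real" where
  "base_cost p c \<beta> \<epsilon> a = (1 - \<beta>) * recruit_cost p c a + \<beta> * \<epsilon>"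

lemma imm_cost_eq_penalty:
  "imm_cost p c r \<beta> \<epsilon> s a = base_cost p c \<beta> \<epsilon> a + \<beta> * \<epsilon> * (1 - succ_prob p r a) * age_penalty s"
  unfolding imm_cost_def base_cost_def age_penalty_def by (simp add: algebra_simps power2_eq_square)

locale vehicle_mdp =
  fixes N :: nat and p c r :: "nat \<Rightarrow> real" and \<beta> \<epsilon> :: real
  assumes N_pos: "1 \<le> N"
    and p_range: "\<forall>n\<in>{1..N}. 0 < p n \<and> p n \<le> 1"
    and c_nonneg: "\<forall>n\<in>{1..N}. 0 \<le> c n"
    and r_range: "\<forall>n\<in>{1..N}. 0 < r n \<and> r n \<le> 1"
    and \<beta>_range: "0 < \<beta>" "\<beta> < 1"
    and \<epsilon>_pos: "0 < \<epsilon>"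
begin

lemma succ_prob_range:
  assumes "a \<subseteq> {1..N}"
  shows "0 \<le> succ_prob p r a \<and> succ_prob p r a \<le> 1"
proof -
  have "0 \<le> 1 - r n * p n \<and> 1 - r n * p n \<le> 1" if "n \<in> a" for n
  proof -
    have "0 < p n" "p n \<le> 1" "0 < r n" "r n \<le> 1"
      using that assms p_range r_range by auto
    then have "r n * p n \<le> 1 * 1" by (intro mult_mono) auto
    then show ?thesis using \<open>0 < p n\<close> \<open>0 < r n\<close> by simp
  qed
  then show ?thesis
    unfolding succ_prob_def by (simp add: prod_nonneg prod_le_1)
qed

lemma base_cost_nonneg:
  assumes "a \<subseteq> {1..N}"
  shows "0 \<le> base_cost p c \<beta> \<epsilon> a"
proof -
  have "0 \<le> p n * c n" if "n \<in> a" for n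
  proof -
    have "n \<in> {1..N}" using that assms by auto
    then show ?thesis using p_range c_nonneg by (simp add: less_imp_le)
  qed
  then have "0 \<le> recruit_cost p c a"
    unfolding recruit_cost_def by (rule sum_nonneg)
  then show ?thesis
    unfolding base_cost_def using \<beta>_range \<epsilon>_pos by simp
qed

sublocale age_cost_model "Pow {1..N}" "succ_prob p r" "base_cost p c \<beta> \<epsilon>" "\<beta> * \<epsilon>"
proof
  have "0 < succ_prob p r {1}"
    using N_pos p_range r_range by (simp add: succ_prob_def)
  then show "\<exists>a\<in>Pow {1..N}. 0 < succ_prob p r a"
    using N_pos by auto
qed (use succ_prob_range base_cost_nonneg \<beta>_range \<epsilon>_pos in auto)

lemma expectation_trans_pmf:
  fixes f :: "nat \<Rightarrow> real"
  assumes "a \<subseteq> {1..N}"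
  shows "measure_pmf.expectation (trans_pmf p r s a) f =
    succ_prob p r a * f 1 + (1 - succ_prob p r a) * f (Suc s)"
  using succ_prob_range[OF assms] by (simp add: trans_pmf_def)

lemma imm_cost_plus_expectation:
  assumes "a \<subseteq> {1..N}" "h 1 = 0"
  shows "imm_cost p c r \<beta> \<epsilon> s a + measure_pmf.expectation (trans_pmf p r s a) h =
    action_value s (h (Suc s)) a"
  unfolding imm_cost_eq_penalty action_value_def expectation_trans_pmf[OF assms(1)]
  using assms(2) by (simp add: algebra_simps)

lemma expected_square_le_imm_cost:
  assumes "a \<subseteq> {1..N}"
  shows "\<beta> * \<epsilon> * measure_pmf.expectation (trans_pmf p r s a) (\<lambda>s'. real s' ^ 2 - 1)
    \<le> imm_cost p c r \<beta> \<epsilon> s a"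
  unfolding imm_cost_eq_penalty expectation_trans_pmf[OF assms] age_penalty_def
  using base_cost_nonneg[OF assms] by (simp add: algebra_simps power2_eq_square)

lemma expectation_square_le_exp_cost:
  assumes adm: "admissible N \<pi>"
  shows "\<beta> * \<epsilon> * measure_pmf.expectation (state_pmf p r \<pi> (Suc T)) (\<lambda>s. real s ^ 2 - 1)
    \<le> exp_cost p c r \<beta> \<epsilon> \<pi> T"
proof -
  have "\<beta> * \<epsilon> * measure_pmf.expectation (trans_pmf p r (fst x) (snd x)) (\<lambda>s. real s ^ 2 - 1)
      \<le> imm_cost p c r \<beta> \<epsilon> (fst x) (snd x)"
    if "x \<in> set_pmf (state_action_pmf p r \<pi> T)" for x
    using set_state_action_pmf_action[OF adm that] by (rule expected_square_le_imm_cost)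
  then have "measure_pmf.expectation (state_action_pmf p r \<pi> T)
      (\<lambda>x. \<beta> * \<epsilon> * measure_pmf.expectation (trans_pmf p r (fst x) (snd x)) (\<lambda>s. real s ^ 2 - 1))
    \<le> measure_pmf.expectation (state_action_pmf p r \<pi> T) (\<lambda>x. imm_cost p c r \<beta> \<epsilon> (fst x) (snd x))"
    by (rule expectation_mono_finite_pmf[OF finite_state_action_pmf[OF adm]])
  then show ?thesis
    unfolding expectation_state_pmf_Suc[OF adm] exp_cost_eq by (simp add: case_prod_unfold)
qed

lemma sum_exp_cost_ge:
  fixes h :: "nat \<Rightarrow> real"
  assumes adm: "admissible N \<pi>" and "h 1 = 0"
    and subsolution: "\<And>s a. a \<in> Pow {1..N} \<Longrightarrow> g + h s \<le> action_value s (h (Suc s)) a"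
  shows "real T * g \<le> (\<Sum>t<T. exp_cost p c r \<beta> \<epsilon> \<pi> t) + measure_pmf.expectation (state_pmf p r \<pi> T) h"
proof -
  let ?residual = "\<lambda>(s, a). imm_cost p c r \<beta> \<epsilon> s a + measure_pmf.expectation (trans_pmf p r s a) h - h s"
  have "g \<le> ?residual x" if "x \<in> set_pmf (state_action_pmf p r \<pi> t)" for x t
    using subsolution[of "snd x" "fst x"] set_state_action_pmf_action[OF adm that]
      imm_cost_plus_expectation[where h = h, OF _ \<open>h 1 = 0\<close>]
    by (simp add: split_beta)
  then have "g \<le> measure_pmf.expectation (state_action_pmf p r \<pi> t) ?residual" for t
    using expectation_mono_finite_pmf[OF finite_state_action_pmf[OF adm], where f = "\<lambda>_. g"] by simp
  then have "real T * g \<le> (\<Sum>t<T. measure_pmf.expectation (state_action_pmf p r \<pi> t) ?residual)"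
    using sum_mono[of "{..<T}" "\<lambda>_. g"] by simp
  then show ?thesis
    using sum_exp_cost_telescope[OF adm, where T = T and h = h] \<open>h 1 = 0\<close> by simp
qed

lemma sum_exp_cost_det_policy:
  fixes h :: "nat \<Rightarrow> real"
  assumes actions: "\<And>s. \<phi> s \<in> Pow {1..N}" and "h 1 = 0"
    and solution: "\<And>s. g + h s = action_value s (h (Suc s)) (\<phi> s)"
  shows "(\<Sum>t<T. exp_cost p c r \<beta> \<epsilon> (det_policy \<phi>) t)
    + measure_pmf.expectation (state_pmf p r (det_policy \<phi>) T) h = real T * g"
proof -
  let ?residual = "\<lambda>(s, a). imm_cost p c r \<beta> \<epsilon> s a + measure_pmf.expectation (trans_pmf p r s a) h - h s"
  have "snd x = \<phi> (fst x)" if "x \<in> set_pmf (state_action_pmf p r (det_policy \<phi>) t)" for x t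
    using that by (auto simp: state_action_pmf_def det_policy_def split_beta)
  then have "?residual x = g" if "x \<in> set_pmf (state_action_pmf p r (det_policy \<phi>) t)" for x t
    using that solution[of "fst x"] actions[of "fst x"]
      imm_cost_plus_expectation[where h = h, OF _ \<open>h 1 = 0\<close>]
    by (simp add: split_beta)
  then have "measure_pmf.expectation (state_action_pmf p r (det_policy \<phi>) t) ?residual = g" for t
    by (subst integral_cong_AE[where g = "\<lambda>_. g"]) (auto simp: AE_measure_pmf_iff)
  moreover have "admissible N (det_policy \<phi>)"
    using actions by (auto simp: admissible_def det_policy_def)
  ultimately show ?thesis
    using sum_exp_cost_telescope[where T = T and h = h] \<open>h 1 = 0\<close> by simp
qed

theorem avg_cost_lower_bound:
  fixes h :: "nat \<Rightarrow> real"
  assumes adm: "admissible N \<pi>" and "0 \<le> g" "h 1 = 0"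
    and subsolution: "\<And>s a. a \<in> Pow {1..N} \<Longrightarrow> g + h s \<le> action_value s (h (Suc s)) a"
    and "0 \<le> \<kappa>" and quadratic: "\<And>s. h s \<le> \<kappa> * (real s ^ 2 - 1) + B"
  shows "ereal g \<le> avg_cost p c r \<beta> \<epsilon> \<pi>"
proof -
  let ?c = "exp_cost p c r \<beta> \<epsilon> \<pi>"
  let ?E = "\<lambda>t. measure_pmf.expectation (state_pmf p r \<pi> t)"
  \<comment> \<open>the stage cost bounds the expected square of the next state, hence also its relative value\<close>
  have lookahead: "?E (Suc T) h \<le> \<kappa> / (\<beta> * \<epsilon>) * ?c T + B" for T
  proof -
    have "?E (Suc T) h \<le> ?E (Suc T) (\<lambda>s. \<kappa> * (real s ^ 2 - 1) + B)"
      using quadratic by (intro expectation_mono_finite_pmf[OF finite_state_pmf[OF adm]])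
    also have "\<dots> = \<kappa> * ?E (Suc T) (\<lambda>s. real s ^ 2 - 1) + B"
      using finite_state_pmf[OF adm] by (simp add: integrable_measure_pmf_finite)
    also have "\<dots> \<le> \<kappa> / (\<beta> * \<epsilon>) * ?c T + B"
      using mult_left_mono[OF expectation_square_le_exp_cost[OF adm, of T] \<open>0 \<le> \<kappa>\<close>] \<beta>_range \<epsilon>_pos
      by (simp add: field_simps)
    finally show ?thesis .
  qed
  have "0 \<le> \<kappa> / (\<beta> * \<epsilon>)"
    using \<open>0 \<le> \<kappa>\<close> \<beta>_range \<epsilon>_pos by simp
  moreover have "0 \<le> \<kappa> / (\<beta> * \<epsilon>) * g + B"
    using quadratic[of 1] \<open>h 1 = 0\<close> mult_nonneg_nonneg[OF calculation \<open>0 \<le> g\<close>] by simp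
  moreover have "real (Suc T) * g - B \<le> (\<Sum>t<Suc T. ?c t) + \<kappa> / (\<beta> * \<epsilon>) * ?c T" for T
    using sum_exp_cost_ge[OF adm \<open>h 1 = 0\<close> subsolution, of "Suc T"] lookahead[of T] by linarith
  ultimately have "real T * g - (\<kappa> / (\<beta> * \<epsilon>) * g + B) \<le> (\<Sum>t<T. ?c t)" for T
    using sum_lower_bound_by_lookahead by blast
  then show ?thesis
    unfolding avg_cost_def by (rule limsup_average_ge)
qed

theorem avg_cost_upper_bound:
  fixes h :: "nat \<Rightarrow> real"
  assumes actions: "\<And>s. \<phi> s \<in> Pow {1..N}" and "h 1 = 0" "mono h"
    and solution: "\<And>s. g + h s = action_value s (h (Suc s)) (\<phi> s)"
  shows "avg_cost p c r \<beta> \<epsilon> (det_policy \<phi>) \<le> ereal g"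
proof -
  have adm: "admissible N (det_policy \<phi>)"
    using actions by (auto simp: admissible_def det_policy_def)
  have "0 \<le> h s" if "s \<in> set_pmf (state_pmf p r (det_policy \<phi>) T)" for s T
    using monoD[OF \<open>mono h\<close>, of 1 s] set_state_pmf that \<open>h 1 = 0\<close> by fastforce
  then have expectation_nonneg: "0 \<le> measure_pmf.expectation (state_pmf p r (det_policy \<phi>) T) h" for T
    using expectation_mono_finite_pmf[OF finite_state_pmf[OF adm], where f = "\<lambda>_. 0"] by simp
  have "(\<Sum>t<T. exp_cost p c r \<beta> \<epsilon> (det_policy \<phi>) t) \<le> real T * g" for T
    using sum_exp_cost_det_policy[OF actions \<open>h 1 = 0\<close> solution, of T] expectation_nonneg[of T]
    by linarith
  then show ?thesis
    unfolding avg_cost_def by (rule limsup_average_le)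
qed

theorem optimal_monotone_eventually_const_policy:
  obtains \<phi> M where "\<And>s. \<phi> s \<subseteq> {1..N}" "1 \<le> M" "\<forall>s\<ge>M. \<phi> s = tail_action"
    "mono (\<lambda>s. succ_prob p r (\<phi> s))"
    "\<And>\<pi>. admissible N \<pi> \<Longrightarrow> avg_cost p c r \<beta> \<epsilon> (det_policy \<phi>) \<le> avg_cost p c r \<beta> \<epsilon> \<pi>"
proof -
  obtain g h \<phi> M \<kappa> B where "0 \<le> g" "h 1 = 0" "mono h"
    and subsolution: "\<And>s a. a \<in> Pow {1..N} \<Longrightarrow> g + h s \<le> action_value s (h (Suc s)) a"
    and actions: "\<And>s. \<phi> s \<in> Pow {1..N}"
    and solution: "\<And>s. g + h s = action_value s (h (Suc s)) (\<phi> s)"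
    and "1 \<le> M" "\<And>s. M \<le> s \<Longrightarrow> \<phi> s = tail_action" "mono (\<lambda>s. succ_prob p r (\<phi> s))"
    and "0 \<le> \<kappa>" and quadratic: "\<And>s. h s \<le> \<kappa> * (real s ^ 2 - 1) + B"
    by (rule average_cost_optimality_solution) blast
  have "avg_cost p c r \<beta> \<epsilon> (det_policy \<phi>) \<le> avg_cost p c r \<beta> \<epsilon> \<pi>" if "admissible N \<pi>" for \<pi>
    using avg_cost_upper_bound[OF actions \<open>h 1 = 0\<close> \<open>mono h\<close> solution]
      avg_cost_lower_bound[OF that \<open>0 \<le> g\<close> \<open>h 1 = 0\<close> subsolution \<open>0 \<le> \<kappa>\<close> quadratic]
    by (rule order_trans)
  moreover have "\<phi> s \<subseteq> {1..N}" for s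
    using actions by simp
  ultimately show ?thesis
    using that \<open>1 \<le> M\<close> \<open>\<And>s. M \<le> s \<Longrightarrow> \<phi> s = tail_action\<close> \<open>mono (\<lambda>s. succ_prob p r (\<phi> s))\<close>
    by blast
qed

end

theorem proposition1:
  fixes N :: nat and p c r :: "nat \<Rightarrow> real" and \<beta> \<epsilon> :: real
  assumes "N \<ge> 1"
    and "\<forall>n\<in>{1..N}. 0 < p n \<and> p n \<le> 1"
    and "\<forall>n\<in>{1..N}. 0 \<le> c n"
    and "\<forall>n\<in>{1..N}. 0 < r n \<and> r n \<le> 1"
    and "0 < \<beta>" and "\<beta> < 1" and "0 < \<epsilon>"
  shows "\<exists>\<phi> K b \<theta>. threshold_policy N \<phi> K b \<theta>
           \<and> (\<forall>\<pi>. admissible N \<pi> \<longrightarrow>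
                 avg_cost p c r \<beta> \<epsilon> (det_policy \<phi>) \<le> avg_cost p c r \<beta> \<epsilon> \<pi>)
           \<and> (\<forall>k. 1 \<le> k \<and> k < K \<longrightarrow> succ_prob p r (b k) \<le> succ_prob p r (b (Suc k)))"
proof -
  interpret vehicle_mdp N p c r \<beta> \<epsilon>
    using assms by unfold_locales
  obtain \<phi> M where actions: "\<And>s. \<phi> s \<subseteq> {1..N}" and "1 \<le> M" "\<forall>s\<ge>M. \<phi> s = tail_action"
    and Q_mono: "mono (\<lambda>s. succ_prob p r (\<phi> s))"
    and optimal: "\<And>\<pi>. admissible N \<pi> \<Longrightarrow>
      avg_cost p c r \<beta> \<epsilon> (det_policy \<phi>) \<le> avg_cost p c r \<beta> \<epsilon> \<pi>"
    by (rule optimal_monotone_eventually_const_policy) blast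
  then obtain K b \<theta> where rep: "threshold_form \<phi> K b \<theta>"
    by (blast dest: eventually_const_threshold_form)
  have "threshold_policy N \<phi> K b \<theta>"
    using rep actions by (rule threshold_policy_if_threshold_form)
  moreover have "\<forall>k. 1 \<le> k \<and> k < K \<longrightarrow> succ_prob p r (b k) \<le> succ_prob p r (b (Suc k))"
    using threshold_form_order[OF rep Q_mono] by blast
  ultimately show ?thesis
    using optimal by blast
qed

end
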